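(* Let $X$ be a compact metric space. Then $X$ is antipodal if and only if $\mathbf{E}(X)$ is convex as a subset of $C(X)$, the space of continuous real-valued functions on $X$.
   Context: A metric space $X$ is antipodal if for every $x\in X$ there exists $\bar x\in X$ with $d_X(x,\bar x)=d_X(x,y)+d_X(y,\bar x)$ for all $y\in X$. $\Delta(X)=\{f:X\to\mathbb{R}\text{ bounded}:f(x)+f(x')\ge d_X(x,x')\}$ and the tight span $\mathbf{E}(X)$ is the set of pointwise-minimal elements of $\Delta(X)$ (these are 1-Lipschitz, hence in $C(X)$). *)

theory Defs
  imports "HOL-Analysis.Analysis"
begin

text \<open>Real-valued functions on X are represented
  extensionally: functions 'a => real that vanish outside X.\<close>

definition antipodal :: "'a::metric_space set \<Rightarrow> bool" where
  "antipodal X \<longleftrightarrow>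
     (\<forall>x\<in>X. \<exists>x'\<in>X. \<forall>y\<in>X. dist x x' = dist x y + dist y x')"

definition Delta :: "'a::metric_space set \<Rightarrow> ('a \<Rightarrow> real) set" where
  "Delta X = {f. (\<forall>x. x \<notin> X \<longrightarrow> f x = 0) \<and> bounded (f ` X) \<and>
                 (\<forall>x\<in>X. \<forall>x'\<in>X. dist x x' \<le> f x + f x')}"

definition tight_span :: "'a::metric_space set \<Rightarrow> ('a \<Rightarrow> real) set" where
  "tight_span X = {f \<in> Delta X. \<forall>g\<in>Delta X. (\<forall>x\<in>X. g x \<le> f x) \<longrightarrow> (\<forall>x\<in>X. g x = f x)}"

definition convex_funs :: "('a \<Rightarrow> real) set \<Rightarrow> bool" where
  "convex_funs S \<longleftrightarrow>
     (\<forall>f\<in>S. \<forall>g\<in>S. \<forall>t::real. 0 \<le> t \<and> t \<le> 1 \<longrightarrow> (\<lambda>x. t * f x + (1 - t) * g x) \<in> S)"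

end

theory Submission
  imports Defs
begin

text \<open>If \<open>x'\<close> is an antipode of \<open>x\<close>, every \<open>f\<close> in the tight span satisfies
  \<open>f x + f x' = d(x, x')\<close>; conversely these affine equations force an element of \<open>\<Delta>(X)\<close>
  to be minimal, so the tight span is convex. For the other direction let \<open>m\<close> be a point
  farthest from \<open>w\<close> and \<open>z\<close> arbitrary. By convexity the midpoint \<open>h\<close> of the distance
  functions \<open>d\<^sub>m\<close> and \<open>d\<^sub>z\<close> is tight, and on a compact space every tight \<open>h\<close> satisfies
  \<open>h w + h y = d(w, y)\<close> for some \<open>y\<close>. Two triangle inequalities then force \<open>y = m\<close> and
  \<open>d(w, m) = d(w, z) + d(z, m)\<close>, so \<open>m\<close> is an antipode of \<open>w\<close>.\<close>

lemma convex_funsD: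
  assumes "convex_funs S" "f \<in> S" "g \<in> S" "0 \<le> t" "t \<le> 1"
  shows "(\<lambda>x. t * f x + (1 - t) * g x) \<in> S"
  using assms unfolding convex_funs_def by blast

lemma Delta_dist_le:
  assumes "f \<in> Delta X" "x \<in> X" "x' \<in> X"
  shows "dist x x' \<le> f x + f x'"
  using assms unfolding Delta_def by blast

lemma Delta_nonneg:
  assumes "f \<in> Delta X" "x \<in> X"
  shows "0 \<le> f x"
  using Delta_dist_le[OF assms assms(2)] by simp

lemma tight_span_imp_Delta: "f \<in> tight_span X \<Longrightarrow> f \<in> Delta X"
  unfolding tight_span_def by blast

lemma Delta_convex_combination:
  assumes f: "f \<in> Delta X" and g: "g \<in> Delta X" and t: "0 \<le> t" "t \<le> 1"
  shows "(\<lambda>x. t * f x + (1 - t) * g x) \<in> Delta X"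
  unfolding Delta_def
proof (intro CollectI conjI allI impI ballI)
  fix x assume "x \<notin> X"
  then show "t * f x + (1 - t) * g x = 0"
    using f g unfolding Delta_def by auto
next
  have "bounded ((\<lambda>x. t * f x) ` X)" "bounded ((\<lambda>x. (1 - t) * g x) ` X)"
    using f g bounded_scaleR_comp[of f X t] bounded_scaleR_comp[of g X "1 - t"]
    unfolding Delta_def by auto
  then show "bounded ((\<lambda>x. t * f x + (1 - t) * g x) ` X)"
    using bounded_plus_comp by force
next
  fix x x' assume "x \<in> X" "x' \<in> X"
  then have "t * dist x x' + (1 - t) * dist x x' \<le> t * (f x + f x') + (1 - t) * (g x + g x')"
    using t Delta_dist_le[OF f] Delta_dist_le[OF g] by (intro add_mono mult_left_mono) auto
  then show "dist x x' \<le> (t * f x + (1 - t) * g x) + (t * f x' + (1 - t) * g x')"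
    by (simp add: algebra_simps)
qed

text \<open>Lowering \<open>f\<close> at the single point \<open>a\<close> to \<open>c\<close> keeps it in \<open>\<Delta>(X)\<close>, so minimality
  forbids \<open>f a > c\<close>.\<close>
lemma tight_span_le:
  assumes f: "f \<in> tight_span X" and a: "a \<in> X" and c: "0 \<le> c"
    and dominated: "\<And>y. y \<in> X \<Longrightarrow> dist a y \<le> c + f y"
  shows "f a \<le> c"
proof -
  have fD: "f \<in> Delta X"
    using tight_span_imp_Delta[OF f] .
  define g where "g = f(a := min (f a) c)"
  have "g \<in> Delta X"
    unfolding Delta_def
  proof (intro CollectI conjI allI impI ballI)
    fix x assume "x \<notin> X"
    then show "g x = 0"
      using fD a unfolding Delta_def g_def by auto
  next
    have "g ` X \<subseteq> insert (min (f a) c) (f ` X)"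
      unfolding g_def by auto
    moreover have "bounded (f ` X)"
      using fD unfolding Delta_def by blast
    ultimately show "bounded (g ` X)"
      using bounded_insert bounded_subset by blast
  next
    fix x x' assume x: "x \<in> X" and x': "x' \<in> X"
    then show "dist x x' \<le> g x + g x'"
      using Delta_dist_le[OF fD x x'] dominated[OF x] dominated[OF x'] Delta_nonneg[OF fD a] c
      by (cases "x = a"; cases "x' = a") (simp_all add: g_def dist_commute)
  qed
  moreover have "\<forall>x\<in>X. g x \<le> f x"
    unfolding g_def by auto
  ultimately have "g a = f a"
    using f a unfolding tight_span_def by blast
  then show ?thesis
    unfolding g_def by simp
qed

lemma tight_span_le_add_dist:
  assumes f: "f \<in> tight_span X" and "a \<in> X" "b \<in> X"
  shows "f a \<le> f b + dist a b"
proof (rule tight_span_le[OF f \<open>a \<in> X\<close>])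
  show "0 \<le> f b + dist a b"
    using Delta_nonneg[OF tight_span_imp_Delta[OF f] \<open>b \<in> X\<close>] by simp
  fix y assume "y \<in> X"
  then show "dist a y \<le> f b + dist a b + f y"
    using Delta_dist_le[OF tight_span_imp_Delta[OF f] \<open>b \<in> X\<close>] dist_triangle[of a y b]
    by fastforce
qed

lemma tight_span_continuous_on:
  assumes "f \<in> tight_span X"
  shows "continuous_on X f"
proof (rule lipschitz_on_continuous_on)
  show "1-lipschitz_on X f"
  proof (rule lipschitz_onI)
    fix a b assume "a \<in> X" "b \<in> X"
    then show "dist (f a) (f b) \<le> 1 * dist a b"
      using tight_span_le_add_dist[OF assms \<open>a \<in> X\<close> \<open>b \<in> X\<close>]
        tight_span_le_add_dist[OF assms \<open>b \<in> X\<close> \<open>a \<in> X\<close>]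
      by (simp add: dist_real_def dist_commute abs_le_iff)
  qed simp
qed

lemma tight_span_antipode_eq:
  assumes f: "f \<in> tight_span X" and "x \<in> X" "x' \<in> X"
    and antipode: "\<And>y. y \<in> X \<Longrightarrow> dist x x' = dist x y + dist y x'"
  shows "f x + f x' = dist x x'"
proof -
  have "f x \<le> max (dist x x' - f x') 0"
  proof (rule tight_span_le[OF f \<open>x \<in> X\<close>])
    fix y assume "y \<in> X"
    then show "dist x y \<le> max (dist x x' - f x') 0 + f y"
      using tight_span_le_add_dist[OF f \<open>x' \<in> X\<close> \<open>y \<in> X\<close>] antipode[of y]
      by (simp add: dist_commute)
  qed simp
  moreover have "dist x x' \<le> f x + f x'"
    using Delta_dist_le[OF tight_span_imp_Delta[OF f] \<open>x \<in> X\<close> \<open>x' \<in> X\<close>] .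
  moreover have "f x' \<le> f x + dist x' x"
    using tight_span_le_add_dist[OF f \<open>x' \<in> X\<close> \<open>x \<in> X\<close>] .
  ultimately show ?thesis
    by (auto simp: dist_commute)
qed

lemma tight_spanI:
  assumes f: "f \<in> Delta X" and partner: "\<And>x. x \<in> X \<Longrightarrow> \<exists>x'\<in>X. f x + f x' = dist x x'"
  shows "f \<in> tight_span X"
  unfolding tight_span_def
proof (intro CollectI conjI ballI impI f)
  fix g x assume g: "g \<in> Delta X" and le: "\<forall>x\<in>X. g x \<le> f x" and "x \<in> X"
  then obtain x' where "x' \<in> X" "f x + f x' = dist x x'"
    using partner by blast
  then show "g x = f x"
    using Delta_dist_le[OF g \<open>x \<in> X\<close> \<open>x' \<in> X\<close>] le[rule_format, OF \<open>x \<in> X\<close>]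
      le[rule_format, OF \<open>x' \<in> X\<close>] by argo
qed

lemma tight_span_partner:
  assumes X: "compact X" and f: "f \<in> tight_span X" and w: "w \<in> X"
  shows "\<exists>y\<in>X. f w + f y = dist w y"
proof -
  define excess where "excess y = f w + f y - dist w y" for y
  have "continuous_on X excess"
    unfolding excess_def using tight_span_continuous_on[OF f]
    by (intro continuous_intros) auto
  then obtain y where y: "y \<in> X" and min: "\<And>y'. y' \<in> X \<Longrightarrow> excess y \<le> excess y'"
    using continuous_attains_inf[OF X] w by blast
  have "excess y \<le> 0"
  proof (rule ccontr)
    assume pos: "\<not> excess y \<le> 0"
    have "f w \<le> max (f w - excess y) 0"
    proof (rule tight_span_le[OF f w])
      fix y' assume "y' \<in> X"
      then show "dist w y' \<le> max (f w - excess y) 0 + f y'"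
        using min[of y'] unfolding excess_def by linarith
    qed simp
    then have "excess w \<le> 0"
      using pos unfolding excess_def by simp
    then show False
      using min[OF w] pos by linarith
  qed
  moreover have "0 \<le> excess y"
    using Delta_dist_le[OF tight_span_imp_Delta[OF f] w y] unfolding excess_def by simp
  ultimately show ?thesis
    using y unfolding excess_def by (intro bexI[of _ y]) auto
qed

lemma convex_tight_span_if_antipodal:
  assumes "antipodal X"
  shows "convex_funs (tight_span X)"
  unfolding convex_funs_def
proof (intro ballI allI impI)
  fix f g and t :: real
  assume f: "f \<in> tight_span X" and g: "g \<in> tight_span X" and t: "0 \<le> t \<and> t \<le> 1"
  show "(\<lambda>x. t * f x + (1 - t) * g x) \<in> tight_span X"
  proof (rule tight_spanI)
    show "(\<lambda>x. t * f x + (1 - t) * g x) \<in> Delta X"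
      using Delta_convex_combination tight_span_imp_Delta f g t by blast
    fix x assume "x \<in> X"
    then obtain x' where "x' \<in> X" and antipode: "\<And>y. y \<in> X \<Longrightarrow> dist x x' = dist x y + dist y x'"
      using assms unfolding antipodal_def by blast
    have "f x + f x' = dist x x'" "g x + g x' = dist x x'"
      using tight_span_antipode_eq[OF _ \<open>x \<in> X\<close> \<open>x' \<in> X\<close> antipode] f g by auto
    have "t * f x + (1 - t) * g x + (t * f x' + (1 - t) * g x')
        = t * (f x + f x') + (1 - t) * (g x + g x')"
      by (simp add: algebra_simps)
    also have "\<dots> = dist x x'"
      using \<open>f x + f x' = dist x x'\<close> \<open>g x + g x' = dist x x'\<close> by (simp add: algebra_simps)
    finally show "\<exists>x'\<in>X. t * f x + (1 - t) * g x + (t * f x' + (1 - t) * g x') = dist x x'"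
      using \<open>x' \<in> X\<close> by blast
  qed
qed

definition dist_fun :: "'a::metric_space set \<Rightarrow> 'a \<Rightarrow> 'a \<Rightarrow> real" where
  "dist_fun X z = (\<lambda>y. if y \<in> X then dist z y else 0)"

lemma dist_fun_in_tight_span:
  assumes "bounded X" "z \<in> X"
  shows "dist_fun X z \<in> tight_span X"
proof (rule tight_spanI)
  obtain e where "\<forall>y\<in>X. dist z y \<le> e"
    using assms(1) bounded_any_center by blast
  then have "bounded (dist z ` X)"
    unfolding bounded_real by (intro exI[of _ e]) simp
  moreover have "dist_fun X z ` X = dist z ` X"
    unfolding dist_fun_def by simp
  ultimately show "dist_fun X z \<in> Delta X"
    unfolding Delta_def by (simp add: dist_fun_def dist_triangle3)
next
  fix x assume "x \<in> X"
  then show "\<exists>x'\<in>X. dist_fun X z x + dist_fun X z x' = dist x x'"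
    using assms(2) by (intro bexI[of _ z]) (simp_all add: dist_fun_def dist_commute)
qed

lemma antipodal_if_convex_tight_span:
  assumes X: "compact X" and convex: "convex_funs (tight_span X)"
  shows "antipodal X"
  unfolding antipodal_def
proof
  fix w assume w: "w \<in> X"
  obtain m where m: "m \<in> X" and farthest: "\<And>y. y \<in> X \<Longrightarrow> dist w y \<le> dist w m"
    using continuous_attains_sup[OF X _ continuous_on_dist[OF continuous_on_const continuous_on_id]] w
    by blast
  show "\<exists>m\<in>X. \<forall>z\<in>X. dist w m = dist w z + dist z m"
  proof (intro bexI[OF _ m] ballI)
    fix z assume z: "z \<in> X"
    define h where "h = (\<lambda>y. 1/2 * dist_fun X m y + (1 - 1/2) * dist_fun X z y)"
    have "h \<in> tight_span X"
      unfolding h_def using dist_fun_in_tight_span[OF compact_imp_bounded[OF X]] m z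
      by (intro convex_funsD[OF convex]) auto
    then obtain y where y: "y \<in> X" and partner: "h w + h y = dist w y"
      using tight_span_partner[OF X _ w] by blast
    have h_eq: "h x = (dist m x + dist z x) / 2" if "x \<in> X" for x
      using that unfolding h_def dist_fun_def by simp
    have sum: "dist w m + dist m y + dist w z + dist z y = 2 * dist w y"
      using partner h_eq[OF w] h_eq[OF y] dist_commute[of m w] dist_commute[of z w] by argo
    have "dist w y \<le> dist w m + dist m y" "dist w y \<le> dist w z + dist z y"
      by (rule dist_triangle)+
    moreover have "dist w y \<le> dist w m"
      using farthest[OF y] .
    ultimately have "dist m y = 0" "dist w y = dist w z + dist z y"
      using sum zero_le_dist[of m y] by argo+
    then show "dist w m = dist w z + dist z m"
      by simp
  qed
qed

theorem proposition2p26: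
  fixes X :: "'a::metric_space set"
  assumes "compact X"
  shows "antipodal X \<longleftrightarrow> convex_funs (tight_span X)"
  using assms antipodal_if_convex_tight_span convex_tight_span_if_antipodal by blast

end
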